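(* Let $F$ be a forest, let $T_1,\ldots,T_\ell$ be trees of $F$ (subgraphs of $F$ that are trees), and let $H$ be the graph with vertex set $\{1,\ldots,\ell\}$ in which distinct $i,j$ are adjacent if and only if $T_i,T_j$ are not anticomplete. If $H$ is bipartite then $H$ is a forest.
   Context: Two subgraphs of a graph are anticomplete if their vertex sets are disjoint and no edge of the graph joins a vertex of one to a vertex of the other. *)

theory Defs
  imports Main
begin

definition sgraph :: "'a set \<Rightarrow> ('a \<Rightarrow> 'a \<Rightarrow> bool) \<Rightarrow> bool" where
  "sgraph V E \<longleftrightarrow> (\<forall>x y. E x y \<longrightarrow> x \<in> V \<and> y \<in> V \<and> x \<noteq> y \<and> E y x)"

definition is_cycle :: "'a set \<Rightarrow> ('a \<Rightarrow> 'a \<Rightarrow> bool) \<Rightarrow> 'a list \<Rightarrow> bool" where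
  "is_cycle V E cs \<longleftrightarrow> length cs \<ge> 3 \<and> distinct cs \<and> set cs \<subseteq> V \<and>
     (\<forall>i < length cs. E (cs ! i) (cs ! ((i + 1) mod length cs)))"

definition acyclic_graph :: "'a set \<Rightarrow> ('a \<Rightarrow> 'a \<Rightarrow> bool) \<Rightarrow> bool" where
  "acyclic_graph V E \<longleftrightarrow> \<not> (\<exists>cs. is_cycle V E cs)"

definition connected_graph :: "'a set \<Rightarrow> ('a \<Rightarrow> 'a \<Rightarrow> bool) \<Rightarrow> bool" where
  "connected_graph V E \<longleftrightarrow> V \<noteq> {} \<and>
     (\<forall>x\<in>V. \<forall>y\<in>V. (\<lambda>u v. E u v \<and> u \<in> V \<and> v \<in> V)\<^sup>*\<^sup>* x y)"

definition forest :: "'a set \<Rightarrow> ('a \<Rightarrow> 'a \<Rightarrow> bool) \<Rightarrow> bool" where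
  "forest V E \<longleftrightarrow> sgraph V E \<and> acyclic_graph V E"

definition tree :: "'a set \<Rightarrow> ('a \<Rightarrow> 'a \<Rightarrow> bool) \<Rightarrow> bool" where
  "tree V E \<longleftrightarrow> forest V E \<and> connected_graph V E"

definition subgraph :: "'a set \<Rightarrow> ('a \<Rightarrow> 'a \<Rightarrow> bool) \<Rightarrow> 'a set \<Rightarrow> ('a \<Rightarrow> 'a \<Rightarrow> bool) \<Rightarrow> bool" where
  "subgraph V' E' V E \<longleftrightarrow> V' \<subseteq> V \<and> (\<forall>x y. E' x y \<longrightarrow> E x y)"

definition anticomplete :: "('a \<Rightarrow> 'a \<Rightarrow> bool) \<Rightarrow> 'a set \<Rightarrow> 'a set \<Rightarrow> bool" where
  "anticomplete E A B \<longleftrightarrow> A \<inter> B = {} \<and> (\<forall>a\<in>A. \<forall>b\<in>B. \<not> E a b)"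

definition bipartite :: "'a set \<Rightarrow> ('a \<Rightarrow> 'a \<Rightarrow> bool) \<Rightarrow> bool" where
  "bipartite V E \<longleftrightarrow> (\<exists>A B. A \<inter> B = {} \<and> A \<union> B = V \<and>
     (\<forall>x y. E x y \<longrightarrow> (x \<in> A \<and> y \<in> B) \<or> (x \<in> B \<and> y \<in> A)))"

definition touch_graph :: "('a \<Rightarrow> 'a \<Rightarrow> bool) \<Rightarrow> nat \<Rightarrow> (nat \<Rightarrow> 'a set) \<Rightarrow> nat \<Rightarrow> nat \<Rightarrow> bool" where
  "touch_graph E l TV i j \<longleftrightarrow> i \<in> {1..l} \<and> j \<in> {1..l} \<and> i \<noteq> j \<and>
     \<not> anticomplete E (TV i) (TV j)"

end

theory Submission
  imports Defs "HOL-Library.Transitive_Closure_Table"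
begin

text \<open>
  A shortest cycle \<open>c\<^sub>0 \<dots> c\<^sub>k\<^sub>-\<^sub>1\<close> of \<open>H\<close> has no chords, and it is not a
  triangle because \<open>H\<close> is bipartite. If \<open>k \<ge> 4\<close>, put \<open>A = T\<^sub>c\<^sub>0\<close>,
  \<open>B = T\<^sub>c\<^sub>2 \<union> \<dots> \<union> T\<^sub>c\<^sub>k\<^sub>-\<^sub>2\<close>, \<open>P = T\<^sub>c\<^sub>1\<close> and \<open>Q = T\<^sub>c\<^sub>k\<^sub>-\<^sub>1\<close>: these are connected
  vertex sets of the forest, \<open>A, B\<close> and \<open>P, Q\<close> are anticomplete, and each of \<open>P, Q\<close>
  touches both \<open>A\<close> and \<open>B\<close>. Since paths in a forest are unique, two connected sets
  that both contain \<open>a \<in> A\<close> and \<open>b \<in> B\<close> still connect \<open>a\<close> to \<open>b\<close> inside their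
  intersection; for \<open>A \<union> P \<union> B\<close> and \<open>A \<union> Q \<union> B\<close> that intersection is \<open>A \<union> B\<close>,
  which is disconnected.
\<close>

definition joined_in :: "('a \<Rightarrow> 'a \<Rightarrow> bool) \<Rightarrow> 'a set \<Rightarrow> 'a \<Rightarrow> 'a \<Rightarrow> bool" where
  "joined_in E S x y \<longleftrightarrow> (\<lambda>u v. E u v \<and> u \<in> S \<and> v \<in> S)\<^sup>*\<^sup>* x y"

definition connected_set :: "('a \<Rightarrow> 'a \<Rightarrow> bool) \<Rightarrow> 'a set \<Rightarrow> bool" where
  "connected_set E S \<longleftrightarrow> (\<forall>x\<in>S. \<forall>y\<in>S. joined_in E S x y)"

definition delete_edge :: "('a \<Rightarrow> 'a \<Rightarrow> bool) \<Rightarrow> 'a \<Rightarrow> 'a \<Rightarrow> 'a \<Rightarrow> 'a \<Rightarrow> bool" where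
  "delete_edge E u v s t \<longleftrightarrow> E s t \<and> \<not> (s = u \<and> t = v) \<and> \<not> (s = v \<and> t = u)"

lemma joined_in_refl [simp]: "joined_in E S x x"
  by (simp add: joined_in_def)

lemma joined_in_edge: "E x y \<Longrightarrow> x \<in> S \<Longrightarrow> y \<in> S \<Longrightarrow> joined_in E S x y"
  unfolding joined_in_def by auto

lemma joined_in_trans: "joined_in E S x y \<Longrightarrow> joined_in E S y z \<Longrightarrow> joined_in E S x z"
  unfolding joined_in_def by auto

lemma joined_in_sym:
  assumes "sgraph V E" and "joined_in E S x y"
  shows "joined_in E S y x"
proof -
  have "symp (\<lambda>u v. E u v \<and> u \<in> S \<and> v \<in> S)"
    using assms(1) unfolding sgraph_def by (auto intro: sympI)
  then show ?thesis
    using assms(2) unfolding joined_in_def by (blast dest: sympD[OF symp_rtranclp])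
qed

lemma joined_in_mem: "joined_in E S x y \<Longrightarrow> x \<noteq> y \<Longrightarrow> x \<in> S \<and> y \<in> S"
  unfolding joined_in_def by (induction rule: rtranclp_induct) auto

lemma joined_in_rtranclp:
  assumes "joined_in E S x y" and "\<And>u v. E u v \<Longrightarrow> u \<in> S \<Longrightarrow> v \<in> S \<Longrightarrow> R u v"
  shows "R\<^sup>*\<^sup>* x y"
  using assms unfolding joined_in_def by (metis (no_types, lifting) mono_rtranclp)

lemma joined_in_mono:
  assumes "joined_in E S x y" and "S \<subseteq> T"
  shows "joined_in E T x y"
  unfolding joined_in_def[of E T] by (rule joined_in_rtranclp[OF assms(1)]) (use assms(2) in auto)

lemma joined_in_anticomplete:
  assumes "anticomplete E A B" and "joined_in E (A \<union> B) a b" and "a \<in> A"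
  shows "b \<in> A"
  using assms(2,3) unfolding joined_in_def
proof (induction rule: rtranclp_induct)
  case (step y z)
  then show ?case using assms(1) unfolding anticomplete_def by blast
qed

lemma not_anticomplete_mono:
  "\<not> anticomplete E X Y \<Longrightarrow> X \<subseteq> X' \<Longrightarrow> Y \<subseteq> Y' \<Longrightarrow> \<not> anticomplete E X' Y'"
  unfolding anticomplete_def by blast

lemma anticomplete_sym: "sgraph V E \<Longrightarrow> anticomplete E X Y \<longleftrightarrow> anticomplete E Y X"
  unfolding anticomplete_def sgraph_def by blast

lemma anticomplete_UN_right:
  "anticomplete E A (\<Union>i\<in>I. S i) \<longleftrightarrow> (\<forall>i\<in>I. anticomplete E A (S i))"
  unfolding anticomplete_def by blast

lemma connected_set_Un:
  assumes "sgraph V E" and "connected_set E S" and "connected_set E T"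
    and "\<not> anticomplete E S T"
  shows "connected_set E (S \<union> T)"
proof -
  obtain a b where ab: "a \<in> S" "b \<in> T" "joined_in E (S \<union> T) a b"
    using assms(4) unfolding anticomplete_def by (metis UnI1 UnI2 disjoint_iff joined_in_edge joined_in_refl)
  have inS: "joined_in E (S \<union> T) x y" if "x \<in> S" "y \<in> S" for x y
    using assms(2) that by (auto simp: connected_set_def intro: joined_in_mono)
  have inT: "joined_in E (S \<union> T) x y" if "x \<in> T" "y \<in> T" for x y
    using assms(3) that by (auto simp: connected_set_def intro: joined_in_mono)
  have across: "joined_in E (S \<union> T) x y" if "x \<in> S" "y \<in> T" for x y
    using inS[OF that(1) ab(1)] ab(3) inT[OF ab(2) that(2)] by (blast intro: joined_in_trans)
  show ?thesis
    unfolding connected_set_def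
    using inS inT across joined_in_sym[OF assms(1)] by blast
qed

lemma connected_set_UN_chain:
  assumes "sgraph V E" and "m \<le> n"
    and "\<And>i. m \<le> i \<Longrightarrow> i \<le> n \<Longrightarrow> connected_set E (S i)"
    and "\<And>i. m \<le> i \<Longrightarrow> i < n \<Longrightarrow> \<not> anticomplete E (S i) (S (Suc i))"
  shows "connected_set E (\<Union>i\<in>{m..n}. S i)"
  using assms(2-4)
proof (induction n rule: nat_induct_at_least)
  case base
  then show ?case by simp
next
  case (Suc n)
  have "\<not> anticomplete E (S n) (S (Suc n))"
    using Suc.prems(2)[of n] Suc.hyps by simp
  then have "\<not> anticomplete E (\<Union>i\<in>{m..n}. S i) (S (Suc n))"
    by (rule not_anticomplete_mono) (use Suc.hyps in auto)
  then have "connected_set E ((\<Union>i\<in>{m..n}. S i) \<union> S (Suc n))"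
    using Suc by (intro connected_set_Un[OF assms(1)]) auto
  moreover have "{m..Suc n} = insert (Suc n) {m..n}"
    using Suc.hyps by auto
  ultimately show ?case by (simp add: Un_commute)
qed

lemma acyclic_delete_edge_disconnects:
  assumes "sgraph V E" and "acyclic_graph V E" and "E u v"
  shows "\<not> (delete_edge E u v)\<^sup>*\<^sup>* v u"
proof
  assume "(delete_edge E u v)\<^sup>*\<^sup>* v u"
  then obtain ys where "rtrancl_path (delete_edge E u v) v ys u"
    by (auto simp: rtranclp_eq_rtrancl_path)
  then obtain xs where p: "rtrancl_path (delete_edge E u v) v xs u" and d: "distinct (v # xs)"
    by (rule rtrancl_path_distinct)
  let ?cs = "v # xs"
  have "u \<noteq> v" using assms(1,3) unfolding sgraph_def by blast
  then have "xs \<noteq> []" using p by (auto elim: rtrancl_path.cases)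
  then have last: "?cs ! length xs = u"
    using rtrancl_path_last[OF p] by (cases xs rule: rev_cases) (auto simp: nth_append)
  have step: "delete_edge E u v (?cs ! i) (?cs ! Suc i)" if "i < length xs" for i
    using rtrancl_path_nth[OF p that] by simp
  have "length xs \<noteq> 1"
  proof
    assume "length xs = 1"
    then show False using step[of 0] last by (simp add: delete_edge_def)
  qed
  with \<open>xs \<noteq> []\<close> have long: "3 \<le> length ?cs" by (cases xs) (auto simp: Suc_le_eq)
  have edge: "E (?cs ! i) (?cs ! ((i + 1) mod length ?cs))" if "i < length ?cs" for i
  proof (cases "i < length xs")
    case True
    then show ?thesis using step[OF True] by (simp add: delete_edge_def)
  next
    case False
    then have "i = length xs" using that by simp
    then show ?thesis using last assms(3) by simp
  qed
  have "set ?cs \<subseteq> V"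
  proof
    fix z assume "z \<in> set ?cs"
    then obtain i where "i < length ?cs" "z = ?cs ! i" by (metis in_set_conv_nth)
    then show "z \<in> V" using edge assms(1) unfolding sgraph_def by blast
  qed
  then have "is_cycle V E ?cs"
    unfolding is_cycle_def using long d edge by blast
  then show False using assms(2) unfolding acyclic_graph_def by blast
qed

lemma joined_in_last_exit:
  assumes "joined_in E S a b" and "a \<in> K" and "b \<notin> K"
  shows "\<exists>u v. u \<in> K \<and> v \<notin> K \<and> E u v \<and> v \<in> S \<and> (delete_edge E u v)\<^sup>*\<^sup>* v b"
  using assms unfolding joined_in_def
proof (induction rule: rtranclp_induct)
  case base
  then show ?case by simp
next
  case (step z w)
  show ?case
  proof (cases "z \<in> K")
    case True
    then show ?thesis using step by blast
  next
    case False
    then obtain u v where uv: "u \<in> K" "v \<notin> K" "E u v" "v \<in> S"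
      and walk: "(delete_edge E u v)\<^sup>*\<^sup>* v z"
      using step by blast
    have "delete_edge E u v z w"
      using uv False step by (auto simp: delete_edge_def)
    with walk have "(delete_edge E u v)\<^sup>*\<^sup>* v w" by simp
    then show ?thesis using uv by blast
  qed
qed

lemma acyclic_joined_in_Int:
  assumes "sgraph V E" and "acyclic_graph V E"
    and "joined_in E S\<^sub>1 x y" and "joined_in E S\<^sub>2 x y"
  shows "joined_in E (S\<^sub>1 \<inter> S\<^sub>2) x y"
proof (rule ccontr)
  assume not_joined: "\<not> joined_in E (S\<^sub>1 \<inter> S\<^sub>2) x y"
  then have "x \<noteq> y" by auto
  then have "x \<in> S\<^sub>1 \<inter> S\<^sub>2" using assms(3,4) joined_in_mem by fastforce
  define K where "K = {z. joined_in E (S\<^sub>1 \<inter> S\<^sub>2) x z}"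
  obtain u v where "u \<in> K" "v \<notin> K" "E u v" "v \<in> S\<^sub>1"
    and v_to_y: "(delete_edge E u v)\<^sup>*\<^sup>* v y"
    using joined_in_last_exit[OF assms(3), of K] not_joined by (auto simp: K_def)
  have "u \<in> S\<^sub>1 \<inter> S\<^sub>2"
    using \<open>u \<in> K\<close> \<open>x \<in> S\<^sub>1 \<inter> S\<^sub>2\<close> joined_in_mem unfolding K_def by fastforce
  have "v \<notin> S\<^sub>2"
  proof
    assume "v \<in> S\<^sub>2"
    then have "joined_in E (S\<^sub>1 \<inter> S\<^sub>2) u v"
      using \<open>u \<in> S\<^sub>1 \<inter> S\<^sub>2\<close> \<open>E u v\<close> \<open>v \<in> S\<^sub>1\<close> by (intro joined_in_edge) auto
    then have "v \<in> K" using \<open>u \<in> K\<close> unfolding K_def by (blast intro: joined_in_trans)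
    then show False using \<open>v \<notin> K\<close> by simp
  qed
  \<comment> \<open>Walks inside \<open>S\<^sub>2\<close> never visit \<open>v\<close>, so they avoid the edge \<open>uv\<close>.\<close>
  have "(delete_edge E u v)\<^sup>*\<^sup>* y x"
    by (rule joined_in_rtranclp[OF joined_in_sym[OF assms(1,4)]])
      (use \<open>v \<notin> S\<^sub>2\<close> in \<open>auto simp: delete_edge_def\<close>)
  moreover have "(delete_edge E u v)\<^sup>*\<^sup>* x u"
    using \<open>u \<in> K\<close> unfolding K_def mem_Collect_eq
    by (rule joined_in_rtranclp) (use \<open>v \<notin> S\<^sub>2\<close> in \<open>auto simp: delete_edge_def\<close>)
  ultimately have "(delete_edge E u v)\<^sup>*\<^sup>* v u"
    using v_to_y by (meson rtranclp_trans)
  then show False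
    using acyclic_delete_edge_disconnects[OF assms(1,2) \<open>E u v\<close>] by blast
qed

lemma acyclic_no_induced_square:
  assumes "sgraph V E" and "acyclic_graph V E"
    and "connected_set E A" "connected_set E B" "connected_set E P" "connected_set E Q"
    and "anticomplete E A B" "anticomplete E P Q"
    and "\<not> anticomplete E A P" "\<not> anticomplete E A Q"
    and "\<not> anticomplete E P B" "\<not> anticomplete E Q B"
  shows False
proof -
  obtain a b where "a \<in> A" "b \<in> B"
    using assms(9,11) unfolding anticomplete_def by blast
  have joined_via: "joined_in E (A \<union> R \<union> B) a b"
    if "connected_set E R" "\<not> anticomplete E A R" "\<not> anticomplete E R B" for R
  proof -
    have "connected_set E (A \<union> R)"
      using connected_set_Un[OF assms(1,3) that(1,2)] .
    moreover have "\<not> anticomplete E (A \<union> R) B"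
      using that(3) by (rule not_anticomplete_mono) auto
    ultimately have "connected_set E (A \<union> R \<union> B)"
      using connected_set_Un[OF assms(1) _ assms(4)] by blast
    then show ?thesis
      using \<open>a \<in> A\<close> \<open>b \<in> B\<close> unfolding connected_set_def by blast
  qed
  have "joined_in E ((A \<union> P \<union> B) \<inter> (A \<union> Q \<union> B)) a b"
    using acyclic_joined_in_Int[OF assms(1,2)] joined_via assms(5,6,9-12) by blast
  moreover have "(A \<union> P \<union> B) \<inter> (A \<union> Q \<union> B) \<subseteq> A \<union> B"
    using assms(8) unfolding anticomplete_def by blast
  ultimately have "joined_in E (A \<union> B) a b"
    by (rule joined_in_mono)
  then have "b \<in> A"
    using joined_in_anticomplete[OF assms(7)] \<open>a \<in> A\<close> by blast
  then show False
    using assms(7) \<open>b \<in> B\<close> unfolding anticomplete_def by blast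
qed

lemma acyclic_no_long_induced_cycle:
  assumes "sgraph V E" and "acyclic_graph V E" and "4 \<le> k"
    and conn: "\<And>i. i < k \<Longrightarrow> connected_set E (S i)"
    and touch: "\<And>i. Suc i < k \<Longrightarrow> \<not> anticomplete E (S i) (S (Suc i))"
    and touch_last: "\<not> anticomplete E (S (k - 1)) (S 0)"
    and apart_0: "\<And>j. 2 \<le> j \<Longrightarrow> j + 2 \<le> k \<Longrightarrow> anticomplete E (S 0) (S j)"
    and apart_1: "anticomplete E (S 1) (S (k - 1))"
  shows False
proof -
  define B where "B = (\<Union>j\<in>{2..k - 2}. S j)"
  have "connected_set E (S 0)" "connected_set E (S 1)" "connected_set E (S (k - 1))"
    using conn assms(3) by simp_all
  moreover have "connected_set E B"
    unfolding B_def using assms(3) conn touch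
    by (intro connected_set_UN_chain[OF assms(1)]) auto
  moreover have "anticomplete E (S 0) B"
    unfolding B_def anticomplete_UN_right using apart_0 assms(3) by auto
  moreover have "\<not> anticomplete E (S 0) (S (k - 1))"
    using touch_last anticomplete_sym[OF assms(1)] by blast
  moreover have "\<not> anticomplete E (S 1) B"
  proof -
    have "\<not> anticomplete E (S 1) (S 2)"
      using touch[of 1] assms(3) by (simp add: numeral_2_eq_2)
    then show ?thesis
      unfolding B_def by (rule not_anticomplete_mono) (use assms(3) in force)+
  qed
  moreover have "\<not> anticomplete E (S (k - 1)) B"
  proof -
    have "Suc (k - 2) = k - 1" using assms(3) by simp
    then have "\<not> anticomplete E (S (k - 1)) (S (k - 2))"
      using touch[of "k - 2"] anticomplete_sym[OF assms(1)] assms(3) by simp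
    then show ?thesis
      unfolding B_def by (rule not_anticomplete_mono) (use assms(3) in force)+
  qed
  ultimately show False
    using acyclic_no_induced_square[OF assms(1,2), of "S 0" B "S 1" "S (k - 1)"] apart_1
      touch[of 0] assms(3) by simp
qed

definition shortest_cycle :: "'a set \<Rightarrow> ('a \<Rightarrow> 'a \<Rightarrow> bool) \<Rightarrow> 'a list \<Rightarrow> bool" where
  "shortest_cycle V E cs \<longleftrightarrow> is_cycle V E cs \<and> (\<forall>ds. is_cycle V E ds \<longrightarrow> length cs \<le> length ds)"

lemma shortest_cycle_exists:
  assumes "is_cycle V E cs"
  obtains ds where "shortest_cycle V E ds"
  using ex_has_least_nat[of "is_cycle V E" cs length] assms
  unfolding shortest_cycle_def by blast

lemma is_cycle_rotate:
  assumes "is_cycle V E cs"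
  shows "is_cycle V E (rotate m cs)"
  unfolding is_cycle_def
proof (intro conjI allI impI)
  show "3 \<le> length (rotate m cs)" "distinct (rotate m cs)" "set (rotate m cs) \<subseteq> V"
    using assms unfolding is_cycle_def by auto
  fix i
  let ?k = "length cs"
  assume "i < length (rotate m cs)"
  then have "?k > 0" by (cases cs) auto
  then have "(m + i) mod ?k < ?k" by simp
  then have "E (cs ! ((m + i) mod ?k)) (cs ! (((m + i) mod ?k + 1) mod ?k))"
    using assms unfolding is_cycle_def by blast
  then show "E (rotate m cs ! i) (rotate m cs ! ((i + 1) mod length (rotate m cs)))"
    using \<open>i < length (rotate m cs)\<close> \<open>?k > 0\<close>
    by (simp add: nth_rotate mod_add_right_eq mod_Suc_eq)
qed

lemma shortest_cycle_rotate:
  "shortest_cycle V E cs \<Longrightarrow> shortest_cycle V E (rotate m cs)"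
  unfolding shortest_cycle_def by (simp add: is_cycle_rotate)

lemma is_cycle_shortcut:
  assumes "is_cycle V E cs" and "2 \<le> j" "j + 2 \<le> length cs" and "E (cs ! 0) (cs ! j)"
  shows "is_cycle V E (cs ! 0 # drop j cs)"
proof -
  let ?k = "length cs" and ?ds = "cs ! 0 # drop j cs"
  have cyc: "distinct cs" "set cs \<subseteq> V"
    and adj: "\<And>i. i < ?k \<Longrightarrow> E (cs ! i) (cs ! ((i + 1) mod ?k))"
    using assms(1) unfolding is_cycle_def by auto
  have len: "length ?ds = ?k - j + 1" using assms(3) by simp
  have "cs ! 0 \<in> set (take j cs)"
    using assms(2,3) by (auto simp: in_set_conv_nth intro!: exI[of _ 0])
  then have "cs ! 0 \<notin> set (drop j cs)"
    using cyc(1) by (metis append_take_drop_id distinct_append disjoint_iff)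
  then have "distinct ?ds" using cyc(1) by simp
  moreover have "set ?ds \<subseteq> V"
  proof -
    have "cs ! 0 \<in> set cs" using assms(3) by (intro nth_mem) linarith
    then show ?thesis using cyc(2) by (auto dest: in_set_dropD)
  qed
  moreover have "E (?ds ! i) (?ds ! ((i + 1) mod length ?ds))" if i: "i < length ?ds" for i
  proof -
    consider "i = 0" | t where "i = Suc t" "j + t + 1 < ?k" | t where "i = Suc t" "j + t + 1 = ?k"
      using i len by (cases i) (auto, linarith)
    then show ?thesis
    proof cases
      case 1
      then show ?thesis using assms(3,4) by simp
    next
      case (2 t)
      then show ?thesis using adj[of "j + t"] assms(3) len by simp
    next
      case (3 t)
      then have "i + 1 = length ?ds" using len by simp
      then have "(i + 1) mod length ?ds = 0" by simp
      then show ?thesis using 3 adj[of "j + t"] by simp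
    qed
  qed
  ultimately show ?thesis
    using assms(2,3) unfolding is_cycle_def by auto
qed

lemma is_cycle_edge_Suc:
  assumes "is_cycle V E cs" and "Suc i < length cs"
  shows "E (cs ! i) (cs ! Suc i)"
  using assms unfolding is_cycle_def by (metis Suc_eq_plus1 Suc_lessD mod_less)

lemma is_cycle_edge_last:
  assumes "is_cycle V E cs"
  shows "E (cs ! (length cs - 1)) (cs ! 0)"
proof -
  have "3 \<le> length cs" using assms unfolding is_cycle_def by blast
  then have "length cs - 1 < length cs" "length cs - 1 + 1 = length cs" by auto
  then show ?thesis using assms unfolding is_cycle_def by (metis mod_self)
qed

lemma shortest_cycle_no_chord:
  assumes "shortest_cycle V E cs" and "2 \<le> j" "j + 2 \<le> length cs"
  shows "\<not> E (cs ! 0) (cs ! j)"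
proof
  assume "E (cs ! 0) (cs ! j)"
  then have "is_cycle V E (cs ! 0 # drop j cs)"
    using assms is_cycle_shortcut unfolding shortest_cycle_def by blast
  then show False using assms unfolding shortest_cycle_def by fastforce
qed

lemma shortest_cycle_no_chord_last:
  assumes "shortest_cycle V E cs" and "4 \<le> length cs"
  shows "\<not> E (cs ! (length cs - 1)) (cs ! 1)"
proof -
  let ?k = "length cs"
  have "rotate (?k - 1) cs ! 0 = cs ! (?k - 1)"
    using nth_rotate[of 0 cs "?k - 1"] assms(2) by fastforce
  moreover have "(?k - 1 + 2) mod ?k = 1"
    using assms(2) by (simp add: Suc_diff_Suc numeral_2_eq_2 mod_Suc)
  then have "rotate (?k - 1) cs ! 2 = cs ! 1"
    using nth_rotate[of 2 cs "?k - 1"] assms(2) by simp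
  moreover have "shortest_cycle V E (rotate (?k - 1) cs)"
    using assms(1) by (rule shortest_cycle_rotate)
  ultimately show ?thesis
    using shortest_cycle_no_chord[of V E "rotate (?k - 1) cs" 2] assms(2) by simp
qed

lemma bipartite_no_triangle:
  assumes "bipartite V E" and "is_cycle V E cs"
  shows "length cs \<noteq> 3"
proof
  assume "length cs = 3"
  then have adj: "E (cs ! i) (cs ! ((i + 1) mod 3))" if "i < 3" for i
    using assms(2) that unfolding is_cycle_def by auto
  have "E (cs ! 0) (cs ! 1)" "E (cs ! 1) (cs ! 2)" "E (cs ! 2) (cs ! 0)"
    using adj[of 0] adj[of 1] adj[of 2] by (simp_all add: numeral_2_eq_2)
  then show False using assms(1) unfolding bipartite_def by blast
qed

lemma sgraph_touch_graph:
  assumes "sgraph V E"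
  shows "sgraph {1..l} (touch_graph E l TV)"
  using assms unfolding sgraph_def touch_graph_def anticomplete_def by blast

lemma connected_set_of_subgraph:
  assumes "subgraph V' E' V E" and "connected_graph V' E'"
  shows "connected_set E V'"
  unfolding connected_set_def
proof (intro ballI)
  fix x y assume "x \<in> V'" "y \<in> V'"
  then have "joined_in E' V' x y"
    using assms(2) unfolding connected_graph_def joined_in_def by blast
  then show "joined_in E V' x y"
    unfolding joined_in_def[of E]
    by (rule joined_in_rtranclp) (use assms(1) in \<open>auto simp: subgraph_def\<close>)
qed

lemma touch_graph_no_long_shortest_cycle:
  assumes "sgraph V E" and "acyclic_graph V E"
    and "\<forall>i\<in>{1..l}. connected_set E (TV i)"
    and "shortest_cycle {1..l} (touch_graph E l TV) cs" and "4 \<le> length cs"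
  shows False
proof -
  let ?H = "touch_graph E l TV" and ?T = "\<lambda>i. TV (cs ! i)" and ?k = "length cs"
  have cyc: "is_cycle {1..l} ?H cs"
    using assms(4) unfolding shortest_cycle_def by blast
  have range: "cs ! i \<in> {1..l}" if "i < ?k" for i
    using cyc nth_mem[OF that] unfolding is_cycle_def by blast
  have touching: "\<not> anticomplete E (?T i) (?T j)" if "?H (cs ! i) (cs ! j)" for i j
    using that unfolding touch_graph_def by blast
  have apart: "anticomplete E (?T i) (?T j)"
    if "i < ?k" "j < ?k" "i \<noteq> j" "\<not> ?H (cs ! i) (cs ! j)" for i j
    using cyc that range nth_eq_iff_index_eq unfolding touch_graph_def is_cycle_def by metis
  show False
  proof (rule acyclic_no_long_induced_cycle[OF assms(1,2,5)])
    show "connected_set E (?T i)" if "i < ?k" for i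
      using assms(3) range[OF that] by blast
    show "\<not> anticomplete E (?T i) (?T (Suc i))" if "Suc i < ?k" for i
      using touching[OF is_cycle_edge_Suc[OF cyc that]] .
    show "\<not> anticomplete E (?T (?k - 1)) (?T 0)"
      using touching[OF is_cycle_edge_last[OF cyc]] .
    show "anticomplete E (?T 0) (?T j)" if "2 \<le> j" "j + 2 \<le> ?k" for j
      using apart[of 0 j] shortest_cycle_no_chord[OF assms(4) that] that by fastforce
    have "\<not> ?H (cs ! 1) (cs ! (?k - 1))"
      using shortest_cycle_no_chord_last[OF assms(4,5)] sgraph_touch_graph[OF assms(1)]
      unfolding sgraph_def by blast
    then show "anticomplete E (?T 1) (?T (?k - 1))"
      using apart[of 1 "?k - 1"] assms(5) by fastforce
  qed
qed

theorem mainTheorem5: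
  fixes V :: "'a set" and E :: "'a \<Rightarrow> 'a \<Rightarrow> bool"
    and l :: nat and TV :: "nat \<Rightarrow> 'a set" and TE :: "nat \<Rightarrow> 'a \<Rightarrow> 'a \<Rightarrow> bool"
  assumes "finite V"
    and "forest V E"
    and "\<forall>i\<in>{1..l}. subgraph (TV i) (TE i) V E \<and> tree (TV i) (TE i)"
    and "bipartite {1..l} (touch_graph E l TV)"
  shows "forest {1..l} (touch_graph E l TV)"
proof -
  have sg: "sgraph V E" and ac: "acyclic_graph V E"
    using assms(2) unfolding forest_def by auto
  have conn: "\<forall>i\<in>{1..l}. connected_set E (TV i)"
    using assms(3) connected_set_of_subgraph unfolding tree_def by blast
  have "acyclic_graph {1..l} (touch_graph E l TV)"
    unfolding acyclic_graph_def
  proof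
    assume "\<exists>cs. is_cycle {1..l} (touch_graph E l TV) cs"
    then obtain cs where shortest: "shortest_cycle {1..l} (touch_graph E l TV) cs"
      using shortest_cycle_exists by metis
    then have "is_cycle {1..l} (touch_graph E l TV) cs"
      unfolding shortest_cycle_def by blast
    then have "4 \<le> length cs"
      using bipartite_no_triangle[OF assms(4)] unfolding is_cycle_def by fastforce
    then show False
      using touch_graph_no_long_shortest_cycle[OF sg ac conn shortest] by blast
  qed
  then show ?thesis
    using sgraph_touch_graph[OF sg] unfolding forest_def by blast
qed

end
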